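(* Let $\{e_j\}_{j\in\mathbb N}$ be a complete orthonormal system in $L$, $L_0:=\operatorname{span}\{e_j: j\in\mathbb N\}$ (finite linear combinations), and let $B:L_0\to L$ be a linear operator. Put $d\Gamma_M(B):=\sum_{j=1}^M a^\dagger(Be_j)a(\bar e_j)$. If the operators $d\Gamma_M(B)$ converge strongly on all of $\mathcal F^{(1)}$ as $M\to\infty$, then $B$ is bounded on $L_0$, i.e. $\sup\{\|Bf\|: f\in L_0,\ \|f\|=1\}<\infty$.
   Context: $L$ is a separable complex Hilbert space with $\dim L=\infty$, scalar product antilinear in the first argument, and a conjugation $f\mapsto\bar f$ (antilinear involution with $(\bar f,\bar g)=(g,f)$). $\mathcal F$ carries a Fock representation of the CCR over $L$: on a dense invariant domain $D$ there are operators $a(f),a^\dagger(f)$, linear in $f$, with $[a(f),a(g)]=0=[a^\dagger(f),a^\dagger(g)]$, $[a(f),a^\dagger(g)]=(\bar f,g)\mathrm{id}$, $(a(f)\Phi,\Psi)=(\Phi,a^\dagger(\bar f)\Psi)$, a unit vacuum $\Omega$ with $a(f)\Omega=0$, and $\mathcal F$ is the closure of the span of all vectors $a^\dagger(f_n)\cdots a^\dagger(f_1)\Omega$. $\mathcal F^{(1)}$ is the closure of $\{a^\dagger(f)\Omega: f\in L\}$; $a(f),a^\dagger(f)$ extend to bounded operators from the closed $n$-particle space to the $(n\mp1)$-particle space, which are used. *)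

theory Defs
  imports "HOL-Analysis.Analysis"
begin

text \<open>The distribution has no complex vector spaces / complex inner products, so we
introduce minimal classes. The inner product is antilinear in the first argument.\<close>

class complex_vector = real_vector +
  fixes scaleC :: "complex \<Rightarrow> 'a \<Rightarrow> 'a"  (infixr \<open>*\<^sub>C\<close> 75)
  assumes scaleC_add_right: "c *\<^sub>C (x + y) = c *\<^sub>C x + c *\<^sub>C y"
    and scaleC_add_left: "(c + d) *\<^sub>C x = c *\<^sub>C x + d *\<^sub>C x"
    and scaleC_scaleC: "c *\<^sub>C (d *\<^sub>C x) = (c * d) *\<^sub>C x"
    and scaleC_one: "1 *\<^sub>C x = x"
    and scaleR_scaleC: "r *\<^sub>R x = complex_of_real r *\<^sub>C x"

class complex_inner = complex_vector + real_normed_vector +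
  fixes cinner :: "'a \<Rightarrow> 'a \<Rightarrow> complex"
  assumes cinner_commute: "cinner x y = cnj (cinner y x)"
    and cinner_add_right: "cinner x (y + z) = cinner x y + cinner x z"
    and cinner_scaleC_right: "cinner x (c *\<^sub>C y) = c * cinner x y"
    and norm_cinner: "complex_of_real ((norm x)\<^sup>2) = cinner x x"

class chilbert_space = complex_inner + complete_space

definition cspan :: "'a::complex_vector set \<Rightarrow> 'a set" where
  "cspan S = {x. \<exists>A c. finite A \<and> A \<subseteq> S \<and> x = (\<Sum>a\<in>A. c a *\<^sub>C a)}"

definition separable_space :: "'a::metric_space itself \<Rightarrow> bool" where
  "separable_space _ \<longleftrightarrow> (\<exists>S::'a set. countable S \<and> closure S = UNIV)"

definition infinite_dimensional :: "'a::complex_vector itself \<Rightarrow> bool" where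
  "infinite_dimensional _ \<longleftrightarrow> (\<forall>S::'a set. finite S \<longrightarrow> cspan S \<noteq> UNIV)"

definition complete_orthonormal_system :: "(nat \<Rightarrow> 'a::complex_inner) \<Rightarrow> bool" where
  "complete_orthonormal_system e \<longleftrightarrow>
     (\<forall>i j. cinner (e i) (e j) = (if i = j then 1 else 0)) \<and>
     closure (cspan (range e)) = UNIV"

definition conjugation :: "('a::complex_inner \<Rightarrow> 'a) \<Rightarrow> bool" where
  "conjugation J \<longleftrightarrow>
     (\<forall>f g. J (f + g) = J f + J g) \<and>
     (\<forall>c f. J (c *\<^sub>C f) = cnj c *\<^sub>C J f) \<and>
     (\<forall>f. J (J f) = f) \<and>
     (\<forall>f g. cinner (J f) (J g) = cinner g f)"

definition creation_vector :: "('l \<Rightarrow> 'f \<Rightarrow> 'f) \<Rightarrow> 'f \<Rightarrow> 'l list \<Rightarrow> 'f" where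
  "creation_vector adag \<Omega> fs = foldr (\<lambda>f \<psi>. adag f \<psi>) fs \<Omega>"

definition fock_rep ::
  "('l::chilbert_space \<Rightarrow> 'l) \<Rightarrow> 'f::chilbert_space set \<Rightarrow> ('l \<Rightarrow> 'f \<Rightarrow> 'f) \<Rightarrow> ('l \<Rightarrow> 'f \<Rightarrow> 'f) \<Rightarrow> 'f \<Rightarrow> bool"
  where
  "fock_rep J D a adag \<Omega> \<longleftrightarrow>
     \<comment> \<open>D is a dense linear subspace, invariant under all a(f), adag(f)\<close>
     0 \<in> D \<and> (\<forall>\<phi>\<in>D. \<forall>\<psi>\<in>D. \<phi> + \<psi> \<in> D) \<and> (\<forall>c. \<forall>\<psi>\<in>D. c *\<^sub>C \<psi> \<in> D) \<and>
     closure D = UNIV \<and>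
     (\<forall>f. \<forall>\<psi>\<in>D. a f \<psi> \<in> D \<and> adag f \<psi> \<in> D) \<and>
     \<comment> \<open>the operators are linear on D\<close>
     (\<forall>f. \<forall>\<phi>\<in>D. \<forall>\<psi>\<in>D. a f (\<phi> + \<psi>) = a f \<phi> + a f \<psi> \<and> adag f (\<phi> + \<psi>) = adag f \<phi> + adag f \<psi>) \<and>
     (\<forall>f c. \<forall>\<psi>\<in>D. a f (c *\<^sub>C \<psi>) = c *\<^sub>C a f \<psi> \<and> adag f (c *\<^sub>C \<psi>) = c *\<^sub>C adag f \<psi>) \<and>
     \<comment> \<open>linear in the test vector f\<close>
     (\<forall>f g. \<forall>\<psi>\<in>D. a (f + g) \<psi> = a f \<psi> + a g \<psi> \<and> adag (f + g) \<psi> = adag f \<psi> + adag g \<psi>) \<and>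
     (\<forall>c f. \<forall>\<psi>\<in>D. a (c *\<^sub>C f) \<psi> = c *\<^sub>C a f \<psi> \<and> adag (c *\<^sub>C f) \<psi> = c *\<^sub>C adag f \<psi>) \<and>
     \<comment> \<open>canonical commutation relations on D\<close>
     (\<forall>f g. \<forall>\<psi>\<in>D. a f (a g \<psi>) = a g (a f \<psi>)) \<and>
     (\<forall>f g. \<forall>\<psi>\<in>D. adag f (adag g \<psi>) = adag g (adag f \<psi>)) \<and>
     (\<forall>f g. \<forall>\<psi>\<in>D. a f (adag g \<psi>) - adag g (a f \<psi>) = cinner (J f) g *\<^sub>C \<psi>) \<and>
     \<comment> \<open>adjointness: (a(f) Phi, Psi) = (Phi, adag(J f) Psi)\<close>
     (\<forall>f. \<forall>\<phi>\<in>D. \<forall>\<psi>\<in>D. cinner (a f \<phi>) \<psi> = cinner \<phi> (adag (J f) \<psi>)) \<and>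
     \<comment> \<open>unit vacuum annihilated by all a(f)\<close>
     \<Omega> \<in> D \<and> norm \<Omega> = 1 \<and> (\<forall>f. a f \<Omega> = 0) \<and>
     \<comment> \<open>cyclicity of the vacuum\<close>
     closure (cspan (range (creation_vector adag \<Omega>))) = UNIV"

definition one_particle_space :: "('l \<Rightarrow> 'f \<Rightarrow> 'f) \<Rightarrow> 'f \<Rightarrow> 'f::metric_space set" where
  "one_particle_space adag \<Omega> = closure (range (\<lambda>f. adag f \<Omega>))"

text \<open>d Gamma_M(B) = sum_{j=1}^M adag(B e_j) a(J e_j); indices here run over j < M with
e indexed from 0.\<close>
definition dGamma_M ::
  "('l \<Rightarrow> 'l) \<Rightarrow> ('l \<Rightarrow> 'f \<Rightarrow> 'f) \<Rightarrow> ('l \<Rightarrow> 'f \<Rightarrow> 'f) \<Rightarrow> (nat \<Rightarrow> 'l) \<Rightarrow> ('l::complex_vector \<Rightarrow> 'l)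
     \<Rightarrow> nat \<Rightarrow> 'f \<Rightarrow> 'f::complex_vector" where
  "dGamma_M J a adag e B M \<psi> = (\<Sum>j<M. adag (B (e j)) (a (J (e j)) \<psi>))"

end

theory Submission imports Defs begin

text \<open>On one-particle vectors, \<open>d\<Gamma>\<^sub>M(B) a\<^sup>\<dagger>(f)\<Omega> = a\<^sup>\<dagger>(T\<^sub>M f)\<Omega>\<close> with
\<open>T\<^sub>M = B P\<^sub>M\<close>, where \<open>P\<^sub>M\<close> is the orthogonal projection onto \<open>span {e\<^sub>j | j < M}\<close>.
Since \<open>\<parallel>a\<^sup>\<dagger>(g)\<Omega>\<parallel> = \<parallel>g\<parallel>\<close>, strong convergence makes the bounded operators \<open>T\<^sub>M\<close>
pointwise bounded on \<open>L\<close>, so by the uniform boundedness principle \<open>\<parallel>T\<^sub>M\<parallel> \<le> K\<close> for all \<open>M\<close>.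
Every \<open>f \<in> L\<^sub>0\<close> satisfies \<open>B f = T\<^sub>M f\<close> for large \<open>M\<close>, hence \<open>\<parallel>B f\<parallel> \<le> K \<parallel>f\<parallel>\<close>.\<close>

lemma Baire_closed_cover_interior:
  fixes F :: "nat \<Rightarrow> 'a::{metric_space,complete_space} set"
  assumes "\<And>n. closed (F n)" and "\<Union>(range F) = UNIV"
  obtains n where "interior (F n) \<noteq> {}"
proof -
  have "euclidean interior_of \<Union>(range F) \<noteq> {}"
    using assms(2) by simp
  then show thesis
    using Baire_category_alt[of "euclidean :: 'a topology" "range F"]
      completely_metrizable_space_euclidean assms(1) closed_closedin that by auto
qed

theorem uniform_boundedness:
  fixes T :: "'i \<Rightarrow> 'a::{real_normed_vector,complete_space} \<Rightarrow> 'b::real_normed_vector"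
  assumes lin: "\<And>i. bounded_linear (T i)"
    and pointwise: "\<And>x. \<exists>C. \<forall>i. norm (T i x) \<le> C"
  obtains K where "\<And>i x. norm (T i x) \<le> K * norm x"
proof -
  define F where "F n = {x. \<forall>i. norm (T i x) \<le> real n}" for n
  have "closed (F n)" for n
    unfolding F_def
    by (intro closed_Collect_all closed_Collect_le continuous_intros
        linear_continuous_on[OF lin])
  moreover have "\<Union>(range F) = UNIV"
  proof -
    have "x \<in> F (nat \<lceil>C\<rceil>)" if "\<forall>i. norm (T i x) \<le> C" for x C
      using that real_nat_ceiling_ge[of C] unfolding F_def by (blast intro: order_trans)
    then show ?thesis
      using pointwise by (metis UNIV_I UN_iff subsetI subset_antisym)
  qed
  ultimately obtain n where "interior (F n) \<noteq> {}"
    by (rule Baire_closed_cover_interior)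
  then obtain x0 r where r: "r > 0" "ball x0 r \<subseteq> F n"
    by (metis ex_in_conv mem_interior)
  have small: "norm (T i y) \<le> 2 * real n" if "norm y < r" for i y
  proof -
    have "x0 + y \<in> ball x0 r" "x0 \<in> ball x0 r"
      using r that by (simp_all add: dist_norm)
    then have "x0 + y \<in> F n" "x0 \<in> F n"
      using r(2) by blast+
    then have "norm (T i (x0 + y)) \<le> real n" "norm (T i x0) \<le> real n"
      unfolding F_def by blast+
    moreover have "T i y = T i (x0 + y) - T i x0"
      using linear_add[OF bounded_linear.linear[OF lin]] by simp
    ultimately show ?thesis
      by (metis norm_triangle_le_diff add_mono mult_2)
  qed
  show thesis
  proof
    fix i x
    show "norm (T i x) \<le> 4 * real n / r * norm x"
    proof (cases "x = 0")
      case False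
      define y where "y = (r / (2 * norm x)) *\<^sub>R x"
      have "norm y < r"
        using False r unfolding y_def by simp
      moreover have "T i y = (r / (2 * norm x)) *\<^sub>R T i x"
        unfolding y_def using linear_scale[OF bounded_linear.linear[OF lin]] by simp
      ultimately have "r / (2 * norm x) * norm (T i x) \<le> 2 * real n"
        using small[of y i] r by simp
      then show ?thesis
        using r False by (simp add: field_simps)
    qed (simp add: linear_0[OF bounded_linear.linear[OF lin]])
  qed
qed

lemma cinner_scaleC_left: "cinner (c *\<^sub>C x) y = cnj c * cinner x (y::'a::complex_inner)"
  using cinner_commute[of "c *\<^sub>C x" y] cinner_commute[of x y]
  by (simp add: cinner_scaleC_right)

lemma cinner_diff_right: "cinner x (y - z) = cinner x y - cinner x (z::'a::complex_inner)"
  by (metis add_diff_cancel cinner_add_right diff_add_cancel)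

lemma cinner_diff_left: "cinner (x - y) z = cinner x z - cinner y (z::'a::complex_inner)"
  using cinner_commute[of "x - y" z] cinner_commute[of x z] cinner_commute[of y z]
  by (simp add: cinner_diff_right)

lemma scaleC_zero_left [simp]: "0 *\<^sub>C (x::'a::complex_vector) = 0"
  by (metis scaleR_scaleC scaleR_zero_left of_real_0)

lemma scaleC_zero_right [simp]: "c *\<^sub>C (0::'a::complex_vector) = 0"
  by (metis add_cancel_right_right add_0 scaleC_add_right)

lemma scaleC_sum_right: "c *\<^sub>C (\<Sum>i\<in>A. f i) = (\<Sum>i\<in>A. c *\<^sub>C (f i::'a::complex_vector))"
  by (induction A rule: infinite_finite_induct) (simp_all add: scaleC_add_right)

lemma norm_eq_of_cinner_eq:
  fixes x :: "'a::complex_inner" and y :: "'b::complex_inner"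
  assumes "cinner x x = cinner y y"
  shows "norm x = norm y"
proof -
  have "complex_of_real ((norm x)\<^sup>2) = complex_of_real ((norm y)\<^sup>2)"
    using assms by (simp only: norm_cinner)
  then have "(norm x)\<^sup>2 = (norm y)\<^sup>2"
    using of_real_eq_iff by blast
  then show ?thesis
    by (simp add: power2_eq_iff_nonneg)
qed

lemma norm_scaleC: "norm (c *\<^sub>C (x::'a::complex_inner)) = cmod c * norm x"
proof -
  have "cinner (c *\<^sub>C x) (c *\<^sub>C x) = (c * cnj c) * cinner x x"
    by (simp add: cinner_scaleC_left cinner_scaleC_right)
  also have "c * cnj c = complex_of_real (cmod c) * complex_of_real (cmod c)"
    by (metis complex_norm_square of_real_mult power2_eq_square)
  also have "\<dots> * cinner x x = cinner (cmod c *\<^sub>R x) (cmod c *\<^sub>R x)"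
    by (simp add: scaleR_scaleC cinner_scaleC_left cinner_scaleC_right)
  finally have "norm (c *\<^sub>C x) = norm (cmod c *\<^sub>R x)"
    by (rule norm_eq_of_cinner_eq)
  then show ?thesis
    by simp
qed

lemma norm_cinner_unit_le:
  fixes u f :: "'a::complex_inner"
  assumes "norm u = 1"
  shows "cmod (cinner u f) \<le> norm f"
proof -
  define c where "c = cinner u f"
  have uu: "cinner u u = 1"
    using norm_cinner[of u] assms by simp
  have fu: "cinner f u = cnj c"
    unfolding c_def by (rule cinner_commute)
  have "complex_of_real ((norm (f - c *\<^sub>C u))\<^sup>2) = cinner (f - c *\<^sub>C u) (f - c *\<^sub>C u)"
    by (rule norm_cinner)
  also have "\<dots> = cinner f f - c * cnj c"
    by (simp add: cinner_diff_left cinner_diff_right cinner_scaleC_left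
        cinner_scaleC_right uu fu flip: c_def)
  also have "\<dots> = complex_of_real ((norm f)\<^sup>2 - (cmod c)\<^sup>2)"
    by (simp only: of_real_diff norm_cinner complex_norm_square)
  finally have "(norm (f - c *\<^sub>C u))\<^sup>2 = (norm f)\<^sup>2 - (cmod c)\<^sup>2"
    using of_real_eq_iff by blast
  then have "(cmod c)\<^sup>2 \<le> (norm f)\<^sup>2"
    using zero_le_power2[of "norm (f - c *\<^sub>C u)"] by linarith
  then show ?thesis
    unfolding c_def by (simp add: power2_le_iff_abs_le)
qed

lemma norm_eq_1_if_cinner_self:
  fixes u :: "'a::complex_inner"
  assumes "cinner u u = 1"
  shows "norm u = 1"
proof -
  have "complex_of_real ((norm u)\<^sup>2) = 1"
    using assms by (simp only: norm_cinner)
  then have "(norm u)\<^sup>2 = 1"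
    using of_real_eq_1_iff by blast
  then show ?thesis
    using norm_ge_zero[of u] by (simp add: power2_eq_1_iff)
qed

lemma sum_scaleC_in_cspan: "finite A \<Longrightarrow> A \<subseteq> S \<Longrightarrow> (\<Sum>a\<in>A. c a *\<^sub>C a) \<in> cspan S"
  unfolding cspan_def by blast

lemma additive_scaleC_on_cspan_sum:
  assumes add: "\<forall>f\<in>cspan S. \<forall>g\<in>cspan S. B (f + g) = B f + B g"
    and scale: "\<forall>c. \<forall>f\<in>cspan S. B (c *\<^sub>C f) = c *\<^sub>C B f"
    and "finite A" "A \<subseteq> S"
  shows "B (\<Sum>a\<in>A. c a *\<^sub>C a) = (\<Sum>a\<in>A. c a *\<^sub>C B a)"
  using \<open>finite A\<close> \<open>A \<subseteq> S\<close>
proof (induction A rule: finite_induct)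
  case empty
  have "0 \<in> cspan S"
    using sum_scaleC_in_cspan[of "{}"] by simp
  then have "B (0 + 0) = B 0 + B 0"
    using add by blast
  then show ?case
    by simp
next
  case (insert x F)
  have x: "x \<in> cspan S"
    using sum_scaleC_in_cspan[of "{x}" S "\<lambda>_. 1"] insert.prems by (simp add: scaleC_one)
  have "c x *\<^sub>C x \<in> cspan S" "(\<Sum>a\<in>F. c a *\<^sub>C a) \<in> cspan S"
    using sum_scaleC_in_cspan[of "{x}" S c] sum_scaleC_in_cspan[of F S c] insert by auto
  then have "B (\<Sum>a\<in>insert x F. c a *\<^sub>C a) = B (c x *\<^sub>C x) + B (\<Sum>a\<in>F. c a *\<^sub>C a)"
    using add insert.hyps by simp
  then show ?case
    using scale x insert by simp
qed

definition truncation :: "(nat \<Rightarrow> 'a::complex_inner) \<Rightarrow> ('a \<Rightarrow> 'b::complex_inner) \<Rightarrow> nat \<Rightarrow> 'a \<Rightarrow> 'b"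
  where "truncation e B M f = (\<Sum>j<M. cinner (e j) f *\<^sub>C B (e j))"

lemma truncation_add: "truncation e B M (f + g) = truncation e B M f + truncation e B M g"
  unfolding truncation_def by (simp add: cinner_add_right scaleC_add_left sum.distrib)

lemma truncation_scaleC: "truncation e B M (c *\<^sub>C f) = c *\<^sub>C truncation e B M f"
  unfolding truncation_def by (simp add: cinner_scaleC_right scaleC_scaleC scaleC_sum_right)

lemma truncation_sum:
  "truncation e B M (\<Sum>a\<in>A. c a *\<^sub>C a) = (\<Sum>a\<in>A. c a *\<^sub>C truncation e B M a)"
proof -
  have "truncation e B M 0 = 0"
    using truncation_scaleC[of e B M 0 0] by simp
  then show ?thesis
    by (induction A rule: infinite_finite_induct) (simp_all add: truncation_add truncation_scaleC)
qed

lemma bounded_linear_truncation: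
  assumes "\<And>j. norm (e j) = 1"
  shows "bounded_linear (truncation e B M)"
proof (rule bounded_linear_intro)
  fix f
  have "norm (truncation e B M f) \<le> (\<Sum>j<M. cmod (cinner (e j) f) * norm (B (e j)))"
    unfolding truncation_def by (rule order_trans[OF norm_sum]) (simp add: norm_scaleC)
  also have "\<dots> \<le> (\<Sum>j<M. norm f * norm (B (e j)))"
    by (intro sum_mono mult_right_mono norm_cinner_unit_le assms norm_ge_zero)
  finally show "norm (truncation e B M f) \<le> norm f * (\<Sum>j<M. norm (B (e j)))"
    by (simp add: sum_distrib_left)
qed (simp_all add: truncation_add truncation_scaleC scaleR_scaleC)

lemma truncation_basis:
  assumes "\<And>i j. cinner (e i) (e j) = (if i = j then 1 else 0)" and "k < M"
  shows "truncation e B M (e k) = B (e k)"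
proof -
  have "truncation e B M (e k) = (\<Sum>j<M. if j = k then B (e k) else 0)"
    unfolding truncation_def by (intro sum.cong) (auto simp: assms(1) scaleC_one)
  then show ?thesis
    using assms(2) by simp
qed

lemma ex_truncation_eq_on_cspan:
  assumes orth: "\<And>i j. cinner (e i) (e j) = (if i = j then 1 else 0)"
    and add: "\<forall>f\<in>cspan (range e). \<forall>g\<in>cspan (range e). B (f + g) = B f + B g"
    and scale: "\<forall>c. \<forall>f\<in>cspan (range e). B (c *\<^sub>C f) = c *\<^sub>C B f"
    and "f \<in> cspan (range e)"
  obtains M where "B f = truncation e B M f"
proof -
  obtain A c where A: "finite A" "A \<subseteq> range e" and f: "f = (\<Sum>a\<in>A. c a *\<^sub>C a)"
    using \<open>f \<in> cspan (range e)\<close> unfolding cspan_def by blast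
  obtain I where I: "finite I" "A = e ` I"
    using finite_subset_image[OF A] by blast
  obtain M where "I \<subseteq> {..<M}"
    using finite_nat_bounded[OF I(1)] by blast
  then have "truncation e B M a = B a" if "a \<in> A" for a
    using that I(2) truncation_basis[OF orth] by blast
  then have "B f = truncation e B M f"
    unfolding f additive_scaleC_on_cspan_sum[OF add scale A] truncation_sum by simp
  then show thesis
    by (rule that)
qed

lemma conjugation_involution: "conjugation J \<Longrightarrow> J (J f) = f"
  unfolding conjugation_def by blast

lemma fock_repD:
  assumes "fock_rep J D a adag \<Omega>"
  shows fock_rep_vacuum_in_domain: "\<Omega> \<in> D"
    and fock_rep_norm_vacuum: "norm \<Omega> = 1"
    and fock_rep_annihilates_vacuum: "a f \<Omega> = 0"
    and fock_rep_creation_in_domain: "\<psi> \<in> D \<Longrightarrow> adag f \<psi> \<in> D"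
    and fock_rep_creation_zero: "adag f 0 = 0"
    and fock_rep_creation_scaleC: "\<psi> \<in> D \<Longrightarrow> adag f (c *\<^sub>C \<psi>) = c *\<^sub>C adag f \<psi>"
    and fock_rep_creation_add_fun: "\<psi> \<in> D \<Longrightarrow> adag (f + g) \<psi> = adag f \<psi> + adag g \<psi>"
    and fock_rep_creation_scaleC_fun: "\<psi> \<in> D \<Longrightarrow> adag (c *\<^sub>C f) \<psi> = c *\<^sub>C adag f \<psi>"
    and fock_rep_ccr: "\<psi> \<in> D \<Longrightarrow> a f (adag g \<psi>) - adag g (a f \<psi>) = cinner (J f) g *\<^sub>C \<psi>"
    and fock_rep_adjoint:
      "\<phi> \<in> D \<Longrightarrow> \<psi> \<in> D \<Longrightarrow> cinner (a f \<phi>) \<psi> = cinner \<phi> (adag (J f) \<psi>)"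
proof -
  have "0 \<in> D" and "\<forall>\<phi>\<in>D. \<forall>\<psi>\<in>D. adag f (\<phi> + \<psi>) = adag f \<phi> + adag f \<psi>"
    using assms unfolding fock_rep_def by (simp_all add: Ball_def)
  then have "adag f (0 + 0) = adag f 0 + adag f 0"
    by blast
  then show "adag f 0 = 0"
    by simp
qed (use assms in \<open>simp_all add: fock_rep_def\<close>)

context
  fixes J :: "'l::chilbert_space \<Rightarrow> 'l" and D :: "'f::chilbert_space set"
    and a adag :: "'l \<Rightarrow> 'f \<Rightarrow> 'f" and \<Omega> :: 'f
  assumes conj: "conjugation J" and fock: "fock_rep J D a adag \<Omega>"
begin

lemma annihilation_creation_vacuum: "a (J h) (adag g \<Omega>) = cinner h g *\<^sub>C \<Omega>"
  using fock_rep_ccr[OF fock fock_rep_vacuum_in_domain[OF fock], of "J h" g]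
  by (simp add: fock_rep_annihilates_vacuum[OF fock] fock_rep_creation_zero[OF fock]
      conjugation_involution[OF conj])

lemma norm_creation_vacuum: "norm (adag g \<Omega>) = norm g"
proof -
  have \<Omega>: "\<Omega> \<in> D" "adag g \<Omega> \<in> D"
    using fock_rep_vacuum_in_domain[OF fock] fock_rep_creation_in_domain[OF fock] by blast+
  have "cinner (adag g \<Omega>) (adag g \<Omega>) = cinner (a (J g) (adag g \<Omega>)) \<Omega>"
    using fock_rep_adjoint[OF fock \<Omega>(2) \<Omega>(1), of "J g"] by (simp add: conjugation_involution[OF conj])
  also have "\<dots> = cnj (cinner g g) * cinner \<Omega> \<Omega>"
    by (simp add: annihilation_creation_vacuum cinner_scaleC_left)
  also have "\<dots> = cinner g g"
    using norm_cinner[of \<Omega>] fock_rep_norm_vacuum[OF fock] cinner_commute[of g g] by simp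
  finally show ?thesis
    by (rule norm_eq_of_cinner_eq)
qed

lemma creation_vacuum_sum_scaleC:
  "adag (\<Sum>j\<in>A. c j *\<^sub>C g j) \<Omega> = (\<Sum>j\<in>A. c j *\<^sub>C adag (g j) \<Omega>)"
proof -
  note \<Omega> = fock_rep_vacuum_in_domain[OF fock]
  have "adag 0 \<Omega> = 0"
    using fock_rep_creation_scaleC_fun[OF fock \<Omega>, of 0 0] by simp
  then show ?thesis
    by (induction A rule: infinite_finite_induct)
      (simp_all add: fock_rep_creation_add_fun[OF fock \<Omega>] fock_rep_creation_scaleC_fun[OF fock \<Omega>])
qed

lemma dGamma_M_creation_vacuum:
  "dGamma_M J a adag e B M (adag f \<Omega>) = adag (truncation e B M f) \<Omega>"
proof -
  have "dGamma_M J a adag e B M (adag f \<Omega>) = (\<Sum>j<M. cinner (e j) f *\<^sub>C adag (B (e j)) \<Omega>)"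
    unfolding dGamma_M_def
    by (simp add: annihilation_creation_vacuum
        fock_rep_creation_scaleC[OF fock fock_rep_vacuum_in_domain[OF fock]])
  then show ?thesis
    unfolding truncation_def by (simp add: creation_vacuum_sum_scaleC)
qed

lemma bounded_truncations_if_convergent:
  assumes "convergent (\<lambda>M. dGamma_M J a adag e B M (adag f \<Omega>))"
  shows "\<exists>C. \<forall>M. norm (truncation e B M f) \<le> C"
proof -
  have "Bseq (\<lambda>M. adag (truncation e B M f) \<Omega>)"
    using assms unfolding dGamma_M_creation_vacuum by (rule convergent_imp_Bseq)
  then obtain C where "\<forall>M. norm (adag (truncation e B M f) \<Omega>) \<le> C"
    by (rule BseqE) blast
  then show ?thesis
    by (auto simp: norm_creation_vacuum)
qed

end

theorem proposition5p4:
  fixes J :: "'l::chilbert_space \<Rightarrow> 'l"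
    and D :: "'f::chilbert_space set"
    and a adag :: "'l \<Rightarrow> 'f \<Rightarrow> 'f"
    and \<Omega> :: 'f
    and e :: "nat \<Rightarrow> 'l"
    and B :: "'l \<Rightarrow> 'l"
  assumes sep: "separable_space TYPE('l)"
    and infdim: "infinite_dimensional TYPE('l)"
    and conj: "conjugation J"
    and fock: "fock_rep J D a adag \<Omega>"
    and onb: "complete_orthonormal_system e"
    and B_add: "\<forall>f\<in>cspan (range e). \<forall>g\<in>cspan (range e). B (f + g) = B f + B g"
    and B_scale: "\<forall>c. \<forall>f\<in>cspan (range e). B (c *\<^sub>C f) = c *\<^sub>C B f"
    and strong_conv: "\<forall>\<psi>\<in>one_particle_space adag \<Omega>. convergent (\<lambda>M. dGamma_M J a adag e B M \<psi>)"
  shows "bdd_above {norm (B f) | f. f \<in> cspan (range e) \<and> norm f = 1}"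
proof -
  have orth: "\<And>i j. cinner (e i) (e j) = (if i = j then 1 else 0)"
    using onb unfolding complete_orthonormal_system_def by blast
  have pointwise: "\<exists>C. \<forall>M. norm (truncation e B M f) \<le> C" for f
  proof (rule bounded_truncations_if_convergent[OF conj fock])
    have "adag f \<Omega> \<in> one_particle_space adag \<Omega>"
      unfolding one_particle_space_def by (rule subsetD[OF closure_subset]) simp
    then show "convergent (\<lambda>M. dGamma_M J a adag e B M (adag f \<Omega>))"
      using strong_conv by blast
  qed
  have "norm (e j) = 1" for j
    using orth[of j j] by (simp add: norm_eq_1_if_cinner_self)
  then obtain K where K: "\<And>M f. norm (truncation e B M f) \<le> K * norm f"
    using uniform_boundedness[OF bounded_linear_truncation pointwise] by blast
  show ?thesis
  proof (rule bdd_aboveI)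
    fix x assume "x \<in> {norm (B f) | f. f \<in> cspan (range e) \<and> norm f = 1}"
    then obtain f where f: "f \<in> cspan (range e)" "norm f = 1" and x: "x = norm (B f)"
      by blast
    obtain M where "B f = truncation e B M f"
      using ex_truncation_eq_on_cspan[OF orth B_add B_scale f(1)] .
    then show "x \<le> K"
      using K[of M f] f(2) x by simp
  qed
qed

end
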